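(* Let $\Theta$ be a quantum operation from system $A$ to system $B$, and suppose there exist a detection-incoherent quantum operation $\Phi$ from $A\otimes R$ to $B$ and a fixed density operator $\rho$ on $R$ such that $\Theta(\sigma)=\Phi(\sigma\otimes\rho)$ for all density operators $\sigma$ on $A$. Then $\Theta$ is detection-incoherent.
   Context: Every finite-dimensional system carries a fixed orthonormal incoherent basis $\{|i\rangle\}$; composite systems use the product basis. The total dephasing map is $\Delta(\rho)=\sum_i|i\rangle\langle i|\rho|i\rangle\langle i|$ (tensor product on composite systems). A quantum operation is a completely positive trace-preserving linear map; it is detection-incoherent iff $\Delta\Phi=\Delta\Phi\Delta$. *)

theory Defs
  imports Complex_Main "Jordan_Normal_Form.Matrix"
begin

text \<open>Operators on an n-dimensional system are complex n x n matrices, written in the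
fixed incoherent (computational) basis. Composite systems use the product basis with
the ordering (i,k) of the pair mapped to index i*dB + k (Kronecker convention).\<close>

definition psd :: "nat \<Rightarrow> complex mat \<Rightarrow> bool" where
  "psd n A \<longleftrightarrow> A \<in> carrier_mat n n \<and>
     (\<forall>v \<in> carrier_vec n. let q = (\<Sum>i<n. cnj (v $ i) * (A *\<^sub>v v) $ i) in Im q = 0 \<and> Re q \<ge> 0)"

definition mtrace :: "complex mat \<Rightarrow> complex" where
  "mtrace A = (\<Sum>i<dim_row A. A $$ (i, i))"

definition density :: "nat \<Rightarrow> complex mat \<Rightarrow> bool" where
  "density n A \<longleftrightarrow> psd n A \<and> mtrace A = 1"

definition kron :: "complex mat \<Rightarrow> complex mat \<Rightarrow> complex mat" where
  "kron A B = mat (dim_row A * dim_row B) (dim_col A * dim_col B)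
     (\<lambda>(r, s). A $$ (r div dim_row B, s div dim_col B) * B $$ (r mod dim_row B, s mod dim_col B))"

text \<open>Total dephasing in the incoherent basis (on a composite system with the product
basis this is the tensor product of the local dephasings).\<close>
definition dephase :: "complex mat \<Rightarrow> complex mat" where
  "dephase A = mat (dim_row A) (dim_col A) (\<lambda>(i, j). if i = j then A $$ (i, j) else 0)"

definition blk :: "nat \<Rightarrow> complex mat \<Rightarrow> nat \<Rightarrow> nat \<Rightarrow> complex mat" where
  "blk n X i j = mat n n (\<lambda>(a, b). X $$ (i * n + a, j * n + b))"

text \<open>The map id_k \<otimes> Phi, for Phi from n-dim to m-dim operators.\<close>
definition ext_id :: "nat \<Rightarrow> nat \<Rightarrow> nat \<Rightarrow> (complex mat \<Rightarrow> complex mat) \<Rightarrow> complex mat \<Rightarrow> complex mat" where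
  "ext_id k n m Phi X = mat (k * m) (k * m)
     (\<lambda>(r, s). Phi (blk n X (r div m) (s div m)) $$ (r mod m, s mod m))"

definition quantum_operation :: "nat \<Rightarrow> nat \<Rightarrow> (complex mat \<Rightarrow> complex mat) \<Rightarrow> bool" where
  "quantum_operation n m Phi \<longleftrightarrow>
     (\<forall>X \<in> carrier_mat n n. Phi X \<in> carrier_mat m m) \<and>
     (\<forall>X \<in> carrier_mat n n. \<forall>Y \<in> carrier_mat n n. Phi (X + Y) = Phi X + Phi Y) \<and>
     (\<forall>X \<in> carrier_mat n n. \<forall>c. Phi (c \<cdot>\<^sub>m X) = c \<cdot>\<^sub>m Phi X) \<and>
     (\<forall>X \<in> carrier_mat n n. mtrace (Phi X) = mtrace X) \<and>
     (\<forall>k X. psd (k * n) X \<longrightarrow> psd (k * m) (ext_id k n m Phi X))"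

definition detection_incoherent :: "nat \<Rightarrow> nat \<Rightarrow> (complex mat \<Rightarrow> complex mat) \<Rightarrow> bool" where
  "detection_incoherent n m Phi \<longleftrightarrow> quantum_operation n m Phi \<and>
     (\<forall>X \<in> carrier_mat n n. dephase (Phi X) = dephase (Phi (dephase X)))"

end

theory Submission imports Defs begin

text \<open>Both \<Delta> \<circ> \<Theta> and \<Delta> \<circ> \<Theta> \<circ> \<Delta> are linear and density matrices span all matrices, so it
suffices to compare them on a density \<sigma>. There \<Theta>(\<sigma>) = \<Phi>(\<sigma> \<otimes> \<rho>), and detection-incoherence of \<Phi>
together with \<Delta>(\<sigma> \<otimes> \<rho>) = \<Delta>\<sigma> \<otimes> \<Delta>\<rho> gives
\<Delta>\<Phi>(\<sigma> \<otimes> \<rho>) = \<Delta>\<Phi>(\<Delta>\<sigma> \<otimes> \<Delta>\<rho>) = \<Delta>\<Phi>(\<Delta>\<sigma> \<otimes> \<rho>); as \<Delta>\<sigma> is again a density, the last term is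
\<Delta>\<Theta>(\<Delta>\<sigma>).\<close>

definition mat_linear :: "nat \<Rightarrow> nat \<Rightarrow> (complex mat \<Rightarrow> complex mat) \<Rightarrow> bool" where
  "mat_linear n m F \<longleftrightarrow>
     (\<forall>X \<in> carrier_mat n n. F X \<in> carrier_mat m m) \<and>
     (\<forall>X \<in> carrier_mat n n. \<forall>Y \<in> carrier_mat n n. F (X + Y) = F X + F Y) \<and>
     (\<forall>X \<in> carrier_mat n n. \<forall>c. F (c \<cdot>\<^sub>m X) = c \<cdot>\<^sub>m F X)"

lemma quantum_operation_mat_linear: "quantum_operation n m F \<Longrightarrow> mat_linear n m F"
  by (simp add: quantum_operation_def mat_linear_def)

lemma mat_linear_comp:
  "mat_linear n m F \<Longrightarrow> mat_linear m k G \<Longrightarrow> mat_linear n k (G \<circ> F)"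
  by (simp add: mat_linear_def)

lemma mat_linear_zero:
  assumes "mat_linear n m F" shows "F (0\<^sub>m n n) = 0\<^sub>m m m"
proof -
  have F0: "F (0\<^sub>m n n) \<in> carrier_mat m m" using assms by (simp add: mat_linear_def)
  have "F (0\<^sub>m n n) = 0 \<cdot>\<^sub>m F (0\<^sub>m n n)"
    using assms unfolding mat_linear_def by (metis smult_zero_mat zero_carrier_mat)
  also have "\<dots> = 0\<^sub>m m m" using F0 by (intro eq_matI) auto
  finally show ?thesis .
qed

lemma dephase_carrier: "A \<in> carrier_mat n n \<Longrightarrow> dephase A \<in> carrier_mat n n"
  by (simp add: dephase_def)

lemma dephase_idem: "dephase (dephase A) = dephase A"
  by (rule eq_matI) (auto simp: dephase_def)

lemma mat_linear_dephase: "mat_linear n n dephase"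
  unfolding mat_linear_def
  by (auto simp: dephase_carrier intro!: eq_matI) (auto simp: dephase_def)

lemma dephase_kron:
  assumes A: "A \<in> carrier_mat a a" and B: "B \<in> carrier_mat b b"
  shows "dephase (kron A B) = kron (dephase A) (dephase B)"
proof (rule eq_matI)
  fix i j assume "i < dim_row (kron (dephase A) (dephase B))" "j < dim_col (kron (dephase A) (dephase B))"
  then have ij: "i < a * b" "j < a * b" using A B by (auto simp: kron_def dephase_def)
  then have "0 < b" by (cases b) auto
  then have "i = j \<longleftrightarrow> i div b = j div b \<and> i mod b = j mod b"
    by (metis div_mult_mod_eq)
  moreover have "i div b < a" "j div b < a" using ij by (auto simp: less_mult_imp_div_less)
  moreover have "i mod b < b" "j mod b < b" using \<open>0 < b\<close> by auto
  ultimately show "dephase (kron A B) $$ (i, j) = kron (dephase A) (dephase B) $$ (i, j)"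
    using A B ij by (auto simp: kron_def dephase_def)
qed (auto simp: kron_def dephase_def)

lemma detection_incoherent_dephase_kron_left:
  assumes "detection_incoherent (n * k) m Phi"
    and A: "A \<in> carrier_mat n n" and B: "B \<in> carrier_mat k k"
  shows "dephase (Phi (kron A B)) = dephase (Phi (kron (dephase A) B))"
proof -
  have DI: "dephase (Phi X) = dephase (Phi (dephase X))" if "X \<in> carrier_mat (n * k) (n * k)" for X
    using assms(1) that by (simp add: detection_incoherent_def)
  have A': "dephase A \<in> carrier_mat n n" using A by (rule dephase_carrier)
  have "kron A B \<in> carrier_mat (n * k) (n * k)" "kron (dephase A) B \<in> carrier_mat (n * k) (n * k)"
    using A A' B by (simp_all add: kron_def)
  then have "dephase (Phi (kron A B)) = dephase (Phi (kron (dephase A) (dephase B)))"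
    using DI A B by (simp add: dephase_kron)
  also have "\<dots> = dephase (Phi (dephase (kron (dephase A) B)))"
    using A' B by (simp add: dephase_kron dephase_idem)
  also have "\<dots> = dephase (Phi (kron (dephase A) B))"
    using DI \<open>kron (dephase A) B \<in> carrier_mat (n * k) (n * k)\<close> by simp
  finally show ?thesis .
qed

lemma psd_diag:
  assumes "psd n A" "i < n"
  shows "Im (A $$ (i, i)) = 0" "Re (A $$ (i, i)) \<ge> 0"
proof -
  have A: "A \<in> carrier_mat n n" using assms by (simp add: psd_def)
  have "(\<Sum>k<n. cnj (unit_vec n i $ k) * (A *\<^sub>v unit_vec n i) $ k) = (A *\<^sub>v unit_vec n i) $ i"
    using assms(2) by (simp add: unit_vec_def if_distrib[of "\<lambda>x. cnj x * _"] sum.delta cong: if_cong)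
  also have "\<dots> = A $$ (i, i)" using A assms(2) by simp
  finally have "(\<Sum>k<n. cnj (unit_vec n i $ k) * (A *\<^sub>v unit_vec n i) $ k) = A $$ (i, i)" .
  moreover have "unit_vec n i \<in> carrier_vec n" by simp
  ultimately show "Im (A $$ (i, i)) = 0" "Re (A $$ (i, i)) \<ge> 0"
    using assms(1) unfolding psd_def Let_def by metis+
qed

lemma psd_dephase:
  assumes "psd n A" shows "psd n (dephase A)"
  unfolding psd_def
proof (intro conjI ballI)
  have A: "A \<in> carrier_mat n n" using assms by (simp add: psd_def)
  then show "dephase A \<in> carrier_mat n n" by (rule dephase_carrier)
  fix v :: "complex vec" assume v: "v \<in> carrier_vec n"
  have "(dephase A *\<^sub>v v) $ i = A $$ (i, i) * v $ i" if "i < n" for i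
    using that A v
    by (auto simp: dephase_def scalar_prod_def if_distrib[of "\<lambda>x. x * _"] sum.delta lessThan_atLeast0
        cong: if_cong)
  then have "(\<Sum>i<n. cnj (v $ i) * (dephase A *\<^sub>v v) $ i)
      = (\<Sum>i<n. A $$ (i, i) * complex_of_real ((cmod (v $ i))\<^sup>2))"
    using complex_norm_square by (auto simp: mult.commute intro!: sum.cong)
  moreover have "Im (\<Sum>i<n. A $$ (i, i) * complex_of_real ((cmod (v $ i))\<^sup>2)) = 0"
    using psd_diag(1)[OF assms] by (simp add: Im_sum)
  moreover have "Re (\<Sum>i<n. A $$ (i, i) * complex_of_real ((cmod (v $ i))\<^sup>2)) \<ge> 0"
    using psd_diag(2)[OF assms] by (auto simp: Re_sum intro!: sum_nonneg)
  ultimately show "let q = \<Sum>i<n. cnj (v $ i) * (dephase A *\<^sub>v v) $ i in Im q = 0 \<and> 0 \<le> Re q"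
    by (simp add: Let_def)
qed

lemma density_dephase:
  assumes "density n A" shows "density n (dephase A)"
proof -
  have "psd n A" "mtrace A = 1" using assms by (simp_all add: density_def)
  moreover from \<open>psd n A\<close> have "mtrace (dephase A) = mtrace A"
    by (auto simp: psd_def mtrace_def dephase_def)
  ultimately show ?thesis by (simp add: density_def psd_dephase)
qed

definition scaled_outer :: "nat \<Rightarrow> real \<Rightarrow> (nat \<Rightarrow> complex) \<Rightarrow> complex mat" where
  "scaled_outer n t u = mat n n (\<lambda>(a, b). complex_of_real t * u a * cnj (u b))"

lemma psd_scaled_outer:
  assumes "t \<ge> 0" shows "psd n (scaled_outer n t u)"
  unfolding psd_def
proof (intro conjI ballI)
  show "scaled_outer n t u \<in> carrier_mat n n" by (simp add: scaled_outer_def)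
  fix v :: "complex vec" assume v: "v \<in> carrier_vec n"
  define w where "w = (\<Sum>b<n. cnj (u b) * v $ b)"
  have "(scaled_outer n t u *\<^sub>v v) $ a = complex_of_real t * u a * w" if "a < n" for a
    using v that
    by (auto simp: scaled_outer_def w_def scalar_prod_def sum_distrib_left lessThan_atLeast0
        intro!: sum.cong)
  then have "(\<Sum>i<n. cnj (v $ i) * (scaled_outer n t u *\<^sub>v v) $ i)
      = (\<Sum>i<n. complex_of_real t * w * (u i * cnj (v $ i)))"
    by (auto intro!: sum.cong)
  also have "\<dots> = complex_of_real t * w * cnj w"
    by (simp add: w_def sum_distrib_left)
  also have "\<dots> = complex_of_real (t * (cmod w)\<^sup>2)"
    using complex_norm_square[of w] by (simp add: mult.assoc)
  finally show "let q = \<Sum>i<n. cnj (v $ i) * (scaled_outer n t u *\<^sub>v v) $ i in Im q = 0 \<and> 0 \<le> Re q"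
    using assms by (simp add: Let_def)
qed

lemma density_scaled_outer:
  assumes "t \<ge> 0" "complex_of_real t * (\<Sum>a<n. u a * cnj (u a)) = 1"
  shows "density n (scaled_outer n t u)"
  using assms psd_scaled_outer[OF assms(1)]
  by (simp add: density_def mtrace_def scaled_outer_def sum_distrib_left mult.assoc)

text \<open>The clause \<open>zero\<close> matters only for \<open>n = 0\<close>, where there are no density matrices.\<close>
inductive_set density_span :: "nat \<Rightarrow> complex mat set" for n where
  zero: "0\<^sub>m n n \<in> density_span n"
| density: "density n A \<Longrightarrow> A \<in> density_span n"
| add: "A \<in> density_span n \<Longrightarrow> B \<in> density_span n \<Longrightarrow> A + B \<in> density_span n"
| smult: "A \<in> density_span n \<Longrightarrow> c \<cdot>\<^sub>m A \<in> density_span n"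

definition mat_unit :: "nat \<Rightarrow> nat \<Rightarrow> nat \<Rightarrow> complex mat" where
  "mat_unit n i j = mat n n (\<lambda>(a, b). if a = i \<and> b = j then 1 else 0)"

lemma mat_unit_diag_in_density_span:
  assumes "i < n" shows "mat_unit n i i \<in> density_span n"
proof -
  have "mat_unit n i i = scaled_outer n 1 (\<lambda>k. if k = i then 1 else 0)"
    by (rule eq_matI) (auto simp: mat_unit_def scaled_outer_def)
  moreover have "density n (scaled_outer n 1 (\<lambda>k. if k = i then 1 else 0))"
    using assms
    by (intro density_scaled_outer) (auto simp: if_distrib[of "\<lambda>x. x * _"] sum.delta cong: if_cong)
  ultimately show ?thesis by (simp add: density_span.density)
qed

lemma sum_two_deltas:
  fixes n :: nat
  assumes "i < n" "j < n" "i \<noteq> j"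
  shows "(\<Sum>k<n. if k = i then x else if k = j then y else (0::'a::comm_monoid_add)) = x + y"
proof -
  have "(\<Sum>k<n. if k = i then x else if k = j then y else 0)
      = (\<Sum>k<n. (if k = i then x else 0) + (if k = j then y else 0))"
    using assms by (intro sum.cong) auto
  also have "\<dots> = x + y" using assms by (simp add: sum.distrib)
  finally show ?thesis .
qed

lemma mat_unit_in_density_span:
  assumes ij: "i < n" "j < n" shows "mat_unit n i j \<in> density_span n"
proof (cases "i = j")
  case True
  then show ?thesis using mat_unit_diag_in_density_span ij by simp
next
  case False
  define u1 where "u1 = (\<lambda>k. if k = i then 1 else if k = j then 1 else (0::complex))"
  define u2 where "u2 = (\<lambda>k. if k = i then 1 else if k = j then - \<i> else (0::complex))"
  have "(\<Sum>a<n. u1 a * cnj (u1 a)) = 2" "(\<Sum>a<n. u2 a * cnj (u2 a)) = 2"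
    using sum_two_deltas[OF ij False, of "1::complex" 1]
    by (simp_all add: u1_def u2_def if_distrib[of "\<lambda>x. x * _"] cong: if_cong)
  then have "density n (scaled_outer n (1/2) u1)" "density n (scaled_outer n (1/2) u2)"
    by (auto intro: density_scaled_outer)
  \<comment> \<open>polarization: the projectors onto \<open>e\<^sub>i + e\<^sub>j\<close>, \<open>e\<^sub>i - \<i> e\<^sub>j\<close>, \<open>e\<^sub>i\<close>, \<open>e\<^sub>j\<close> span \<open>|i\<rangle>\<langle>j|\<close>\<close>
  moreover have decomp: "mat_unit n i j = scaled_outer n (1/2) u1 + (- \<i>) \<cdot>\<^sub>m scaled_outer n (1/2) u2
      + ((\<i> - 1) / 2) \<cdot>\<^sub>m mat_unit n i i + ((\<i> - 1) / 2) \<cdot>\<^sub>m mat_unit n j j"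
    using False
    by (intro eq_matI) (auto simp: mat_unit_def scaled_outer_def u1_def u2_def field_simps)
  ultimately show ?thesis
    unfolding decomp
    using ij by (intro density_span.add density_span.smult density_span.density
        mat_unit_diag_in_density_span)
qed

lemma carrier_mat_subset_density_span: "carrier_mat n n \<subseteq> density_span n"
proof
  fix X :: "complex mat" assume X: "X \<in> carrier_mat n n"
  have "mat n n (\<lambda>p. if p \<in> S then X $$ p else 0) \<in> density_span n"
    if "finite S" "S \<subseteq> {..<n} \<times> {..<n}" for S
    using that
  proof (induction S rule: finite_induct)
    case empty
    have "mat n n (\<lambda>p. if p \<in> {} then X $$ p else 0) = 0\<^sub>m n n" by (rule eq_matI) auto
    then show ?case by (simp add: density_span.zero)
  next
    case (insert p S)
    obtain i j where p: "p = (i, j)" by (cases p)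
    have "mat n n (\<lambda>q. if q \<in> insert p S then X $$ q else 0)
        = mat n n (\<lambda>q. if q \<in> S then X $$ q else 0) + X $$ (i, j) \<cdot>\<^sub>m mat_unit n i j"
      using insert(2) p by (intro eq_matI) (auto simp: mat_unit_def)
    then show ?case
      using insert p by (auto intro!: density_span.add density_span.smult mat_unit_in_density_span)
  qed
  moreover have "X = mat n n (\<lambda>p. if p \<in> {..<n} \<times> {..<n} then X $$ p else 0)"
    using X by (intro eq_matI) auto
  ultimately show "X \<in> density_span n" by (metis finite_SigmaI finite_lessThan order_refl)
qed

lemma density_span_carrier: "A \<in> density_span n \<Longrightarrow> A \<in> carrier_mat n n"
  by (induction rule: density_span.induct) (auto simp: density_def psd_def)

lemma mat_linear_eq_on_densities:
  assumes F: "mat_linear n m F" and G: "mat_linear n m G"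
    and dens: "\<And>\<sigma>. density n \<sigma> \<Longrightarrow> F \<sigma> = G \<sigma>"
    and X: "X \<in> carrier_mat n n"
  shows "F X = G X"
proof -
  have "X \<in> density_span n" using X carrier_mat_subset_density_span by blast
  then show ?thesis
  proof (induction rule: density_span.induct)
    case zero
    show ?case using mat_linear_zero[OF F] mat_linear_zero[OF G] by simp
  next
    case (add A B)
    then show ?case using F G density_span_carrier by (simp add: mat_linear_def)
  next
    case (smult A c)
    then show ?case using F G density_span_carrier by (simp add: mat_linear_def)
  qed (rule dens)
qed

theorem mainTheorem13:
  fixes Theta Phi :: "complex mat \<Rightarrow> complex mat" and dA dR dB :: nat and \<rho> :: "complex mat"
  assumes "quantum_operation dA dB Theta"
    and "detection_incoherent (dA * dR) dB Phi"
    and "density dR \<rho>"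
    and "\<forall>\<sigma>. density dA \<sigma> \<longrightarrow> Theta \<sigma> = Phi (kron \<sigma> \<rho>)"
  shows "detection_incoherent dA dB Theta"
proof -
  have \<rho>: "\<rho> \<in> carrier_mat dR dR" using assms(3) by (simp add: density_def psd_def)
  have lin: "mat_linear dA dB Theta" using assms(1) by (rule quantum_operation_mat_linear)
  have "dephase (Theta \<sigma>) = dephase (Theta (dephase \<sigma>))" if "density dA \<sigma>" for \<sigma>
  proof -
    have "\<sigma> \<in> carrier_mat dA dA" using that by (simp add: density_def psd_def)
    then show ?thesis
      using assms(4) that density_dephase[OF that]
        detection_incoherent_dephase_kron_left[OF assms(2) _ \<rho>] by simp
  qed
  moreover have "mat_linear dA dB (dephase \<circ> Theta)" "mat_linear dA dB (dephase \<circ> Theta \<circ> dephase)"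
    using lin mat_linear_dephase by (auto intro!: mat_linear_comp)
  ultimately have "dephase (Theta X) = dephase (Theta (dephase X))" if "X \<in> carrier_mat dA dA" for X
    using mat_linear_eq_on_densities[of dA dB "dephase \<circ> Theta" "dephase \<circ> Theta \<circ> dephase"] that
    by simp
  then show ?thesis using assms(1) by (simp add: detection_incoherent_def)
qed

end
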